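(* Let $N\ge1$, $Y\ge0$ integers, $K=N+Y-1$, and let $M$ be an integer with $\alpha:=M-K-1>-1$. Let $w(t)=t^\alpha e^{-t}$ on $(0,\infty)$, $\langle p,q\rangle=\int_0^\infty p(t)q(t)w(t)\,dt$, and let $C_{N-1}(t)$ be the monic Laguerre polynomial of degree $N-1$, $C_{N-1}=(-1)^{N-1}(N-1)!\,L^{(\alpha)}_{N-1}$. Define $$D_{N-1}(t)=\Gamma(M)\sum_{j=N-1}^{K}\frac{(-K)_j}{\Gamma(M-K+j)}L^{(\alpha)}_j(t).$$ Then $D_{N-1}$ is a monic polynomial of the form $t^K+\sum_{l=0}^{N-2}a_l t^l$ (i.e. a linear combination of $1,t,\dots,t^{N-2},t^K$ with coefficient $1$ on $t^K$), satisfies $\langle t^l,D_{N-1}\rangle=0$ for $l=0,\dots,N-2$, and $$\langle C_{N-1},D_{N-1}\rangle=(-1)^{N-1}\Gamma(M)\,(-K)_{N-1}.$$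
   Context: $L^{(\alpha)}_j(t)=\sum_{l=0}^j\frac{(-1)^l\Gamma(j+\alpha+1)}{\Gamma(j-l+1)\Gamma(\alpha+l+1)}\frac{t^l}{l!}$ is the generalized Laguerre polynomial; $(a)_j=a(a+1)\cdots(a+j-1)$, $(a)_0=1$. *)

theory Defs
  imports "HOL-Analysis.Analysis"
begin

definition laguerre :: "real \<Rightarrow> nat \<Rightarrow> real \<Rightarrow> real" where
  "laguerre \<alpha> j t =
     (\<Sum>l=0..j. (-1)^l * Gamma (real j + \<alpha> + 1)
        / (Gamma (real j - real l + 1) * Gamma (\<alpha> + real l + 1)) * t^l / fact l)"

definition lag_inner :: "real \<Rightarrow> (real \<Rightarrow> real) \<Rightarrow> (real \<Rightarrow> real) \<Rightarrow> real" where
  "lag_inner \<alpha> p q = (LINT t:{0<..}|lborel. p t * q t * (t powr \<alpha> * exp (- t)))"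

definition C_poly :: "real \<Rightarrow> nat \<Rightarrow> real \<Rightarrow> real" where
  "C_poly \<alpha> N t = (-1)^(N-1) * fact (N-1) * laguerre \<alpha> (N-1) t"

definition D_poly :: "int \<Rightarrow> nat \<Rightarrow> nat \<Rightarrow> real \<Rightarrow> real \<Rightarrow> real" where
  "D_poly M K N \<alpha> t = Gamma (real_of_int M) *
     (\<Sum>j=N-1..K. pochhammer (- real K) j / Gamma (real_of_int M - real K + real j)
                   * laguerre \<alpha> j t)"

end

theory Submission
  imports Defs "HOL-Computational_Algebra.Polynomial"
begin

text \<open>
  For \<open>\<alpha> = M - K - 1 > -1\<close> the coefficient \<open>\<Gamma>(M) (-K)_j / \<Gamma>(M - K + j)\<close> is exactly the
  coefficient \<open>c_j\<close> of \<open>L_j\<close> in the expansion \<open>t^K = \<Sum>_{j \<le> K} c_j L_j\<close>, so \<open>D_{N-1}\<close> is \<open>t^K\<close>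
  minus the part of this expansion of degree below \<open>N - 1\<close>.  Integrating termwise and using
  \<open>\<Gamma>(\<alpha> + i + l + 1) = \<Gamma>(\<alpha> + i + 1) (\<alpha> + i + 1)_l\<close> turns \<open>\<langle>t^l, L_j\<rangle>\<close> into a multiple of
  \<open>\<Sum>_i (-1)^i (j choose i) (\<alpha> + i + 1)_l\<close>, a \<open>j\<close>-th finite difference of a polynomial of degree \<open>l\<close>
  in \<open>i\<close>: it vanishes for \<open>l < j\<close> and equals \<open>(-1)^j j!\<close> for \<open>l = j\<close>.  Hence for \<open>deg p \<le> N - 1\<close>
  only the term \<open>j = N - 1\<close> of \<open>D_{N-1}\<close> contributes to \<open>\<langle>p, D_{N-1}\<rangle>\<close>.
\<close>

definition alternating_binomial_sum :: "nat \<Rightarrow> (nat \<Rightarrow> 'a::comm_ring_1) \<Rightarrow> 'a" where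
  "alternating_binomial_sum n f = (\<Sum>i\<le>n. (-1) ^ i * of_nat (n choose i) * f i)"

lemma alternating_binomial_sum_Suc:
  "alternating_binomial_sum (Suc n) f = - alternating_binomial_sum n (\<lambda>i. f (Suc i) - f i)"
proof -
  let ?c = "\<lambda>k i. (-1) ^ i * of_nat (k choose i) :: 'a"
  have "alternating_binomial_sum (Suc n) f = f 0 + (\<Sum>i\<le>n. ?c (Suc n) (Suc i) * f (Suc i))"
    unfolding alternating_binomial_sum_def by (subst sum.atMost_Suc_shift) simp
  also have "\<dots> = f 0 - (\<Sum>i\<le>n. ?c n i * f (Suc i)) + (\<Sum>i\<le>n. ?c n (Suc i) * f (Suc i))"
    by (simp add: sum.distrib[symmetric] sum_subtractf[symmetric] algebra_simps)
  also have "(\<Sum>i\<le>n. ?c n (Suc i) * f (Suc i)) = (\<Sum>i\<le>Suc n. ?c n i * f i) - f 0"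
    by (subst sum.atMost_Suc_shift) simp
  also have "(\<Sum>i\<le>Suc n. ?c n i * f i) = (\<Sum>i\<le>n. ?c n i * f i)"
    by (simp add: binomial_eq_0)
  finally show ?thesis
    by (simp add: alternating_binomial_sum_def sum_subtractf algebra_simps)
qed

lemma alternating_binomial_sum_mult:
  "alternating_binomial_sum n (\<lambda>i. c * f i) = c * alternating_binomial_sum n f"
  by (simp add: alternating_binomial_sum_def sum_distrib_left mult_ac)

lemma pochhammer_Suc_diff:
  fixes x :: "'a::comm_ring_1"
  shows "pochhammer (x + 1) (Suc m) - pochhammer x (Suc m) = of_nat (Suc m) * pochhammer (x + 1) m"
  unfolding pochhammer_rec[of x m] pochhammer_Suc[of "x + 1" m] by (simp add: ring_distribs)

lemma alternating_binomial_sum_pochhammer_Suc: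
  "alternating_binomial_sum (Suc n) (\<lambda>i. pochhammer (b + of_nat i) (Suc l))
     = - (of_nat (Suc l) * alternating_binomial_sum n (\<lambda>i. pochhammer (b + 1 + of_nat i) l))"
proof -
  have "pochhammer (b + of_nat (Suc i)) (Suc l) - pochhammer (b + of_nat i) (Suc l)
      = of_nat (Suc l) * pochhammer (b + 1 + of_nat i) l" for i
    using pochhammer_Suc_diff[of "b + of_nat i" l] by (simp add: add_ac)
  then show ?thesis
    by (simp only: alternating_binomial_sum_Suc alternating_binomial_sum_mult)
qed

lemma alternating_binomial_sum_pochhammer_less:
  "l < n \<Longrightarrow> alternating_binomial_sum n (\<lambda>i. pochhammer (b + of_nat i) l) = 0"
proof (induction n arbitrary: l b)
  case (Suc n)
  show ?case
  proof (cases l)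
    case 0
    then show ?thesis
      using choose_alternating_sum[of "Suc n", where 'a='a] by (simp add: alternating_binomial_sum_def)
  next
    case (Suc k)
    then show ?thesis
      using Suc.IH[of k "b + 1"] Suc.prems by (simp only: alternating_binomial_sum_pochhammer_Suc) simp
  qed
qed simp

lemma alternating_binomial_sum_pochhammer_self:
  "alternating_binomial_sum n (\<lambda>i. pochhammer (b + of_nat i) n) = (-1) ^ n * fact n"
proof (induction n arbitrary: b)
  case 0
  then show ?case
    by (simp add: alternating_binomial_sum_def)
next
  case (Suc n)
  then show ?case
    using Suc.IH[of "b + 1"] by (simp only: alternating_binomial_sum_pochhammer_Suc) (simp add: algebra_simps)
qed

lemma pochhammer_minus_of_nat:
  "pochhammer (- of_nat n) k = (-1) ^ k * fact k * (of_nat (n choose k) :: 'a::field_char_0)"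
  by (simp add: binomial_gbinomial gbinomial_pochhammer)

lemma sum_alternating_choose_mult_choose:
  "(\<Sum>j\<le>n. (-1) ^ j * of_nat (n choose j) * of_nat (j choose i))
     = (if i = n then (-1) ^ n else 0 :: 'a::comm_ring_1)"
proof (cases "i \<le> n")
  case True
  have "(\<Sum>j\<le>n. (-1) ^ j * of_nat (n choose j) * of_nat (j choose i))
      = (\<Sum>j=i..n. (-1) ^ j * of_nat (n choose j) * of_nat (j choose i) :: 'a)"
    by (rule sum.mono_neutral_right) (auto simp: binomial_eq_0)
  also have "\<dots> = (\<Sum>j=i..n. of_nat (n choose i) * ((-1) ^ j * of_nat ((n - i) choose (j - i))))"
  proof (rule sum.cong)
    fix j assume "j \<in> {i..n}"
    then have "of_nat (n choose j) * of_nat (j choose i)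
        = (of_nat (n choose i) * of_nat ((n - i) choose (j - i)) :: 'a)"
      by (simp flip: of_nat_mult add: choose_mult)
    then show "(-1) ^ j * of_nat (n choose j) * of_nat (j choose i)
        = of_nat (n choose i) * ((-1) ^ j * of_nat ((n - i) choose (j - i)) :: 'a)"
      by (metis mult.assoc mult.left_commute)
  qed simp
  also have "\<dots> = of_nat (n choose i) * (-1) ^ i * (\<Sum>m\<le>n - i. (-1) ^ m * of_nat ((n - i) choose m))"
    using True by (simp add: sum.atLeastAtMost_shift_0 atLeast0AtMost sum_distrib_left power_add mult_ac)
  also have "\<dots> = (if i = n then (-1) ^ n else 0)"
    using True choose_alternating_sum[of "n - i", where 'a='a] by auto
  finally show ?thesis .
qed (auto simp: binomial_eq_0 intro!: sum.neutral)

lemma Gamma_add_of_nat: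
  fixes x :: real
  assumes "x > 0"
  shows "Gamma (x + of_nat n) = Gamma x * pochhammer x n"
proof -
  have "x \<notin> \<int>\<^sub>\<le>\<^sub>0"
    using assms by (auto dest: nonpos_Ints_nonpos)
  then show ?thesis
    using pochhammer_Gamma[of x n] Gamma_real_pos[OF assms] by (simp add: field_simps)
qed

lemma Gamma_add_of_nat_pos:
  fixes \<alpha> :: real
  assumes "\<alpha> > -1"
  shows "Gamma (\<alpha> + real j + 1) > 0"
  using assms of_nat_0_le_iff[of j] by (intro Gamma_real_pos) linarith

lemma has_bochner_integral_Gamma:
  fixes s :: real
  assumes "s > 0"
  shows "has_bochner_integral lborel (\<lambda>t. indicator {0<..} t * (t powr (s - 1) * exp (- t))) (Gamma s)"
proof (rule has_bochner_integral_nn_integral)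
  show "(\<lambda>t. indicator {0<..} t * (t powr (s - 1) * exp (- t))) \<in> borel_measurable lborel"
    by measurable
  show "AE t in lborel. 0 \<le> indicator {0<..} t * (t powr (s - 1) * exp (- t))"
    by (simp add: indicator_def)
  show "0 \<le> Gamma s"
    using assms by (simp add: less_imp_le)
  \<comment> \<open>at \<open>t = 0\<close> the right-hand side vanishes too, because \<open>0 powr _ = 0\<close>\<close>
  have "indicator {0<..} t * (t powr (s - 1) * exp (- t)) = indicator {0..} t * t powr (s - 1) / exp t"
    for t :: real
    by (auto simp: indicator_def exp_minus field_simps)
  then show "(\<integral>\<^sup>+ t. ennreal (indicator {0<..} t * (t powr (s - 1) * exp (- t))) \<partial>lborel)
      = ennreal (Gamma s)"
    using Gamma_conv_nn_integral_real[OF assms] by simp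
qed

lemma poly_eq_sum_lessThan:
  fixes p :: "'a::comm_semiring_1 poly"
  assumes "\<And>i. n \<le> i \<Longrightarrow> coeff p i = 0"
  shows "poly p x = (\<Sum>i<n. coeff p i * x ^ i)"
proof (cases "p = 0")
  case False
  then have "degree p < n"
    using assms leading_coeff_neq_0 not_less by blast
  have "poly p x = (\<Sum>i\<le>degree p. coeff p i * x ^ i)"
    by (rule poly_altdef)
  also have "\<dots> = (\<Sum>i<n. coeff p i * x ^ i)"
    using \<open>degree p < n\<close> by (intro sum.mono_neutral_left) (auto simp: coeff_eq_0)
  finally show ?thesis .
qed simp

definition laguerre_moment :: "real \<Rightarrow> real poly \<Rightarrow> real" where
  "laguerre_moment \<alpha> p = (\<Sum>i\<le>degree p. coeff p i * Gamma (\<alpha> + real i + 1))"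

lemma has_bochner_integral_laguerre_moment:
  assumes "\<alpha> > -1"
  shows "has_bochner_integral lborel
           (\<lambda>t. indicator {0<..} t * (poly p t * (t powr \<alpha> * exp (- t)))) (laguerre_moment \<alpha> p)"
proof -
  have "has_bochner_integral lborel
          (\<lambda>t. \<Sum>i\<le>degree p. coeff p i * (indicator {0<..} t * (t powr (\<alpha> + real i + 1 - 1) * exp (- t))))
          (laguerre_moment \<alpha> p)"
    unfolding laguerre_moment_def using assms
    by (intro has_bochner_integral_sum has_bochner_integral_mult_right has_bochner_integral_Gamma) simp
  moreover have "(\<Sum>i\<le>degree p. coeff p i * (indicator {0<..} t * (t powr (\<alpha> + real i + 1 - 1) * exp (- t))))
      = indicator {0<..} t * (poly p t * (t powr \<alpha> * exp (- t)))" for t :: real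
    by (cases "t > 0")
       (auto simp: poly_altdef powr_add powr_realpow sum_distrib_left sum_distrib_right mult_ac)
  ultimately show ?thesis
    by simp
qed

lemma lag_inner_poly:
  assumes "\<alpha> > -1"
  shows "lag_inner \<alpha> (poly p) (poly q) = laguerre_moment \<alpha> (p * q)"
  unfolding lag_inner_def set_lebesgue_integral_def
  using has_bochner_integral_integral_eq[OF has_bochner_integral_laguerre_moment[OF assms, of "p * q"]]
  by (simp add: mult.assoc)

lemma laguerre_moment_eq_sum:
  "degree p \<le> n \<Longrightarrow> laguerre_moment \<alpha> p = (\<Sum>i\<le>n. coeff p i * Gamma (\<alpha> + real i + 1))"
  unfolding laguerre_moment_def by (rule sum.mono_neutral_left) (auto simp: coeff_eq_0)

lemma laguerre_moment_add: "laguerre_moment \<alpha> (p + q) = laguerre_moment \<alpha> p + laguerre_moment \<alpha> q"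
proof -
  let ?n = "max (degree p) (degree q)"
  have "degree (p + q) \<le> ?n"
    by (rule degree_add_le) auto
  then show ?thesis
    by (simp add: laguerre_moment_eq_sum[of _ ?n] sum.distrib algebra_simps)
qed

lemma laguerre_moment_smult: "laguerre_moment \<alpha> (smult c p) = c * laguerre_moment \<alpha> p"
  by (simp add: laguerre_moment_eq_sum[of "smult c p" "degree p"] laguerre_moment_def
      sum_distrib_left mult_ac)

lemma laguerre_moment_sum: "laguerre_moment \<alpha> (\<Sum>j\<in>A. f j) = (\<Sum>j\<in>A. laguerre_moment \<alpha> (f j))"
  by (induction A rule: infinite_finite_induct)
     (simp_all add: laguerre_moment_def[of _ 0] laguerre_moment_add)

lemma laguerre_moment_monom: "laguerre_moment \<alpha> (monom c k) = c * Gamma (\<alpha> + real k + 1)"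
proof -
  have "laguerre_moment \<alpha> (monom c k) = (\<Sum>i\<le>k. (if k = i then c else 0) * Gamma (\<alpha> + real i + 1))"
    by (simp add: laguerre_moment_eq_sum[of "monom c k" k] degree_monom_le coeff_monom)
  also have "\<dots> = (\<Sum>i\<le>k. if k = i then c * Gamma (\<alpha> + real i + 1) else 0)"
    by (rule sum.cong) simp_all
  finally show ?thesis
    by simp
qed

definition laguerre_poly :: "real \<Rightarrow> nat \<Rightarrow> real poly" where
  "laguerre_poly \<alpha> j = (\<Sum>l\<le>j. monom ((-1) ^ l * Gamma (real j + \<alpha> + 1)
      / (fact (j - l) * Gamma (\<alpha> + real l + 1) * fact l)) l)"

lemma poly_laguerre_poly: "poly (laguerre_poly \<alpha> j) = laguerre \<alpha> j"
proof
  fix t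
  have "Gamma (real j - real l + 1) = fact (j - l)" if "l \<le> j" for l
    using Gamma_fact[of "j - l"] that by (simp add: of_nat_diff add.commute)
  then show "poly (laguerre_poly \<alpha> j) t = laguerre \<alpha> j t"
    unfolding laguerre_poly_def laguerre_def
    by (auto simp: poly_sum poly_monom atLeast0AtMost intro!: sum.cong)
qed

lemma coeff_laguerre_poly:
  "coeff (laguerre_poly \<alpha> j) l = (if l \<le> j then (-1) ^ l * Gamma (real j + \<alpha> + 1)
      / (fact (j - l) * Gamma (\<alpha> + real l + 1) * fact l) else 0)"
  by (simp add: laguerre_poly_def coeff_sum coeff_monom)

lemma degree_laguerre_poly_le: "degree (laguerre_poly \<alpha> j) \<le> j"
  by (rule degree_le) (simp add: coeff_laguerre_poly)

lemma coeff_laguerre_poly_self: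
  assumes "\<alpha> > -1"
  shows "coeff (laguerre_poly \<alpha> j) j = (-1) ^ j / fact j"
  using Gamma_add_of_nat_pos[OF assms, of j] by (simp add: coeff_laguerre_poly add_ac)

lemma laguerre_moment_monom_mult_laguerre_poly:
  assumes "\<alpha> > -1"
  shows "laguerre_moment \<alpha> (monom 1 l * laguerre_poly \<alpha> j)
    = Gamma (real j + \<alpha> + 1) / fact j * alternating_binomial_sum j (\<lambda>i. pochhammer (\<alpha> + 1 + real i) l)"
proof -
  let ?c = "\<lambda>i. (-1) ^ i * Gamma (real j + \<alpha> + 1) / (fact (j - i) * Gamma (\<alpha> + real i + 1) * fact i)"
  have "laguerre_moment \<alpha> (monom 1 l * laguerre_poly \<alpha> j) = (\<Sum>i\<le>j. ?c i * Gamma (\<alpha> + real (i + l) + 1))"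
    by (simp add: laguerre_poly_def sum_distrib_left mult_monom laguerre_moment_sum laguerre_moment_monom
        add.commute)
  also have "\<dots> = (\<Sum>i\<le>j. Gamma (real j + \<alpha> + 1) / fact j
      * ((-1) ^ i * of_nat (j choose i) * pochhammer (\<alpha> + 1 + real i) l))"
  proof (rule sum.cong)
    fix i assume "i \<in> {..j}"
    then have "i \<le> j" by simp
    have "Gamma (\<alpha> + real (i + l) + 1) = Gamma (\<alpha> + real i + 1) * pochhammer (\<alpha> + 1 + real i) l"
      using Gamma_add_of_nat[of "\<alpha> + 1 + real i" l] assms by (simp add: add_ac)
    moreover have "Gamma (\<alpha> + real i + 1) > 0"
      by (rule Gamma_add_of_nat_pos[OF assms])
    ultimately show "?c i * Gamma (\<alpha> + real (i + l) + 1) = Gamma (real j + \<alpha> + 1) / fact j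
      * ((-1) ^ i * of_nat (j choose i) * pochhammer (\<alpha> + 1 + real i) l)"
      using binomial_fact[OF \<open>i \<le> j\<close>, where 'a=real] by (simp add: field_simps)
  qed simp
  finally show ?thesis
    by (simp add: alternating_binomial_sum_def sum_distrib_left)
qed

lemma laguerre_moment_mult_laguerre_poly:
  assumes "\<alpha> > -1" and "degree p \<le> j"
  shows "laguerre_moment \<alpha> (p * laguerre_poly \<alpha> j) = coeff p j * (-1) ^ j * Gamma (real j + \<alpha> + 1)"
proof -
  have monom_eq: "monom (coeff p l) l = smult (coeff p l) (monom 1 l)" for l
    by (simp add: smult_monom)
  have "p * laguerre_poly \<alpha> j = (\<Sum>l\<le>j. monom (coeff p l) l) * laguerre_poly \<alpha> j"
    using poly_as_sum_of_monoms'[OF assms(2)] by simp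
  also have "\<dots> = (\<Sum>l\<le>j. smult (coeff p l) (monom 1 l * laguerre_poly \<alpha> j))"
    by (simp only: sum_distrib_right monom_eq mult_smult_left)
  finally have "laguerre_moment \<alpha> (p * laguerre_poly \<alpha> j)
      = (\<Sum>l\<le>j. coeff p l * laguerre_moment \<alpha> (monom 1 l * laguerre_poly \<alpha> j))"
    by (simp add: laguerre_moment_sum laguerre_moment_smult)
  also have "\<dots> = (\<Sum>l\<le>j. if l = j then coeff p j * (-1) ^ j * Gamma (real j + \<alpha> + 1) else 0)"
  proof (rule sum.cong)
    fix l assume "l \<in> {..j}"
    then consider "l < j" | "l = j"
      by fastforce
    then show "coeff p l * laguerre_moment \<alpha> (monom 1 l * laguerre_poly \<alpha> j)
        = (if l = j then coeff p j * (-1) ^ j * Gamma (real j + \<alpha> + 1) else 0)"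
      by cases (simp_all add: laguerre_moment_monom_mult_laguerre_poly[OF assms(1)]
          alternating_binomial_sum_pochhammer_less alternating_binomial_sum_pochhammer_self)
  qed simp
  finally show ?thesis
    by simp
qed

definition laguerre_expansion_coeff :: "real \<Rightarrow> nat \<Rightarrow> nat \<Rightarrow> real" where
  "laguerre_expansion_coeff \<alpha> K j
     = Gamma (real K + \<alpha> + 1) * pochhammer (- real K) j / Gamma (\<alpha> + real j + 1)"

lemma monom_eq_laguerre_expansion:
  assumes "\<alpha> > -1"
  shows "monom 1 K = (\<Sum>j\<le>K. smult (laguerre_expansion_coeff \<alpha> K j) (laguerre_poly \<alpha> j))"
proof (rule poly_eqI)
  fix i
  let ?G = "Gamma (real K + \<alpha> + 1) / Gamma (\<alpha> + real i + 1)"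
  have "laguerre_expansion_coeff \<alpha> K j * coeff (laguerre_poly \<alpha> j) i
      = (-1) ^ i * ?G * ((-1) ^ j * of_nat (K choose j) * of_nat (j choose i))" for j
  proof (cases "i \<le> j")
    case True
    show ?thesis
      using True binomial_fact[OF True, where 'a=real] Gamma_add_of_nat_pos[OF assms, of j]
        Gamma_add_of_nat_pos[OF assms, of i]
      by (simp add: laguerre_expansion_coeff_def coeff_laguerre_poly pochhammer_minus_of_nat
          field_simps power_add add_ac)
  qed (simp add: coeff_laguerre_poly binomial_eq_0)
  then have "coeff (\<Sum>j\<le>K. smult (laguerre_expansion_coeff \<alpha> K j) (laguerre_poly \<alpha> j)) i
      = (-1) ^ i * ?G * (\<Sum>j\<le>K. (-1) ^ j * of_nat (K choose j) * of_nat (j choose i))"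
    by (simp add: coeff_sum sum_distrib_left)
  also have "\<dots> = coeff (monom 1 K) i"
    using Gamma_add_of_nat_pos[OF assms, of i] by (simp add: sum_alternating_choose_mult_choose add_ac)
  finally show "coeff (monom 1 K) i
      = coeff (\<Sum>j\<le>K. smult (laguerre_expansion_coeff \<alpha> K j) (laguerre_poly \<alpha> j)) i" ..
qed

definition truncated_laguerre_expansion :: "real \<Rightarrow> nat \<Rightarrow> nat \<Rightarrow> real poly" where
  "truncated_laguerre_expansion \<alpha> K n
     = (\<Sum>j=n..K. smult (laguerre_expansion_coeff \<alpha> K j) (laguerre_poly \<alpha> j))"

lemma truncated_laguerre_expansion_eq:
  assumes "\<alpha> > -1" and "n \<le> K"
  shows "truncated_laguerre_expansion \<alpha> K n
    = monom 1 K - (\<Sum>j<n. smult (laguerre_expansion_coeff \<alpha> K j) (laguerre_poly \<alpha> j))"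
proof -
  let ?f = "\<lambda>j. smult (laguerre_expansion_coeff \<alpha> K j) (laguerre_poly \<alpha> j)"
  have "{..K} = {..<n} \<union> {n..K}"
    using assms(2) by auto
  then have "monom 1 K = sum ?f ({..<n} \<union> {n..K})"
    by (simp add: monom_eq_laguerre_expansion[OF assms(1), of K])
  also have "\<dots> = sum ?f {..<n} + sum ?f {n..K}"
    by (rule sum.union_disjoint) auto
  finally show ?thesis
    by (simp add: truncated_laguerre_expansion_def)
qed

lemma poly_truncated_laguerre_expansion:
  assumes "\<alpha> > -1" and "n \<le> K"
  shows "poly (truncated_laguerre_expansion \<alpha> K n) t
    = t ^ K + (\<Sum>l<n. coeff (truncated_laguerre_expansion \<alpha> K n) l * t ^ l)"
proof -
  define q where "q = (\<Sum>j<n. smult (laguerre_expansion_coeff \<alpha> K j) (laguerre_poly \<alpha> j))"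
  have D: "truncated_laguerre_expansion \<alpha> K n = monom 1 K - q"
    unfolding q_def by (rule truncated_laguerre_expansion_eq[OF assms])
  have "coeff q i = 0" if "n \<le> i" for i
    using that by (simp add: q_def coeff_sum coeff_laguerre_poly)
  then have "poly q t = (\<Sum>l<n. coeff q l * t ^ l)"
    by (rule poly_eq_sum_lessThan)
  moreover have "coeff (truncated_laguerre_expansion \<alpha> K n) l = - coeff q l" if "l < n" for l
    using that assms(2) by (simp add: D coeff_monom)
  ultimately show ?thesis
    by (simp add: D poly_monom sum_negf)
qed

lemma laguerre_moment_mult_truncated_laguerre_expansion:
  assumes "\<alpha> > -1" and "n \<le> K" and "degree p \<le> n"
  shows "laguerre_moment \<alpha> (p * truncated_laguerre_expansion \<alpha> K n)
    = coeff p n * (-1) ^ n * Gamma (real K + \<alpha> + 1) * pochhammer (- real K) n"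
proof -
  have "laguerre_moment \<alpha> (p * truncated_laguerre_expansion \<alpha> K n)
      = (\<Sum>j=n..K. laguerre_expansion_coeff \<alpha> K j * (coeff p j * (-1) ^ j * Gamma (real j + \<alpha> + 1)))"
    using assms by (simp add: truncated_laguerre_expansion_def sum_distrib_left mult_smult_right
        laguerre_moment_sum laguerre_moment_smult laguerre_moment_mult_laguerre_poly)
  also have "\<dots> = laguerre_expansion_coeff \<alpha> K n * (coeff p n * (-1) ^ n * Gamma (real n + \<alpha> + 1))"
    using assms by (subst sum.remove[of _ n]) (auto simp: coeff_eq_0 intro!: sum.neutral)
  also have "\<dots> = coeff p n * (-1) ^ n * Gamma (real K + \<alpha> + 1) * pochhammer (- real K) n"
    using Gamma_add_of_nat_pos[OF assms(1), of n] by (simp add: laguerre_expansion_coeff_def add_ac)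
  finally show ?thesis .
qed

lemma D_poly_eq_truncated_laguerre_expansion:
  assumes "\<alpha> = real_of_int M - real K - 1"
  shows "D_poly M K N \<alpha> = poly (truncated_laguerre_expansion \<alpha> K (N - 1))"
proof -
  have "real_of_int M = real K + \<alpha> + 1"
    using assms by simp
  then show ?thesis
    by (simp add: D_poly_def truncated_laguerre_expansion_def laguerre_expansion_coeff_def
        fun_eq_iff poly_sum poly_laguerre_poly sum_distrib_left mult_ac add_ac)
qed

theorem mainTheorem6:
  fixes N Y K :: nat and M :: int and \<alpha> :: real
  assumes "N \<ge> 1"
    and "K = N + Y - 1"
    and "\<alpha> = real_of_int M - real K - 1"
    and "\<alpha> > -1"
  shows "(\<exists>a :: nat \<Rightarrow> real. \<forall>t. D_poly M K N \<alpha> t = t ^ K + (\<Sum>l<N-1. a l * t ^ l))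
    \<and> (\<forall>l < N - 1. lag_inner \<alpha> (\<lambda>t. t ^ l) (D_poly M K N \<alpha>) = 0)
    \<and> lag_inner \<alpha> (C_poly \<alpha> N) (D_poly M K N \<alpha>)
        = (-1) ^ (N - 1) * Gamma (real_of_int M) * pochhammer (- real K) (N - 1)"
proof -
  define D where "D = truncated_laguerre_expansion \<alpha> K (N - 1)"
  have NK: "N - 1 \<le> K"
    using assms(2) by simp
  have M: "real_of_int M = real K + \<alpha> + 1"
    using assms(3) by simp
  have D_poly_eq: "D_poly M K N \<alpha> = poly D"
    unfolding D_def by (rule D_poly_eq_truncated_laguerre_expansion[OF assms(3)])
  have inner: "lag_inner \<alpha> (poly p) (D_poly M K N \<alpha>)
      = coeff p (N - 1) * (-1) ^ (N - 1) * Gamma (real_of_int M) * pochhammer (- real K) (N - 1)"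
    if "degree p \<le> N - 1" for p
    using laguerre_moment_mult_truncated_laguerre_expansion[OF assms(4) NK that]
    by (simp add: D_poly_eq lag_inner_poly[OF assms(4)] D_def M)
  have C_poly_eq: "C_poly \<alpha> N = poly (smult ((-1) ^ (N - 1) * fact (N - 1)) (laguerre_poly \<alpha> (N - 1)))"
    by (simp add: C_poly_def fun_eq_iff poly_laguerre_poly)
  have "\<forall>t. D_poly M K N \<alpha> t = t ^ K + (\<Sum>l<N-1. coeff D l * t ^ l)"
    using poly_truncated_laguerre_expansion[OF assms(4) NK] by (simp add: D_poly_eq D_def)
  moreover have "lag_inner \<alpha> (\<lambda>t. t ^ l) (D_poly M K N \<alpha>) = 0" if "l < N - 1" for l
    using inner[of "monom 1 l"] that by (simp add: degree_monom_eq coeff_monom poly_monom[abs_def])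
  moreover have "lag_inner \<alpha> (C_poly \<alpha> N) (D_poly M K N \<alpha>)
      = (-1) ^ (N - 1) * Gamma (real_of_int M) * pochhammer (- real K) (N - 1)"
    using inner[of "smult ((-1) ^ (N - 1) * fact (N - 1)) (laguerre_poly \<alpha> (N - 1))"]
    by (simp add: C_poly_eq degree_laguerre_poly_le coeff_laguerre_poly_self[OF assms(4)])
  ultimately show ?thesis
    by blast
qed

end
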